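(* If $\sum_ir_ix_i\le f\le\sum_js_jy_j$ for positive simple functions $\sum_ir_ix_i$, $\sum_js_jy_j$ and $f\in R$, then $\sum_ir_ix_i\le\sum_js_jy_j$.
   Context: $R$ is a Riesz space over $\mathbb{Q}$ with strong unit $1$; rationals $r$ are identified with $r\cdot1$. $\mathrm{Spec}(R)$ is the distributive lattice generated by $D(a)$, $a\in R$, subject to $D(1)=1$; $D(a)\wedge D(-a)=0$; $D(a+b)\le D(a)\vee D(b)$; $D(a)=0$ if $a\le0$; $D(a\vee b)=D(a)\vee D(b)$. $B$ is the Boolean algebra freely generated by $\mathrm{Spec}(R)$; $(f>r):=D(f-r)$, $(f<r):=D(r-f)$, $(f\le r):=\neg(f>r)$, $(f\ge r):=\neg(f<r)$. A positive simple function is a formal finite sum $\sum_i r_ix_i$ with rationals $r_i\ge0$, $x_i\in B$; for a finite index set $I$, $x_I:=\bigwedge_{i\in I}x_i$ ($x_\emptyset=1$), $r_I:=\sum_{i\in I}r_i$ ($r_\emptyset=0$). Orders: $\sum_ir_ix_i\le\sum_js_jy_j$ iff for every finite index set $I$, $x_I\le\bigvee\{y_J: J \text{ finite index set with } r_I\le s_J\}$; $\sum_ir_ix_i\le f$ iff $x_I\le(f\ge r_I)$ for every finite $I$; $f\le\sum_js_jy_j$ iff $1=\bigvee_J((f\le s_J)\wedge y_J)$ over all finite index sets $J$. *)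

theory Defs
  imports Complex_Main "HOL-Library.Lattice_Algebras"
begin

text \<open>R is a lattice-ordered abelian group (type class lattice_ab_group_add)
  together with a scalar multiplication by rationals making it a Q-vector
  space whose order is compatible with positive scalars; u is the strong unit 1.\<close>

definition riesz_Q_unit :: "(rat \<Rightarrow> 'a::lattice_ab_group_add \<Rightarrow> 'a) \<Rightarrow> 'a \<Rightarrow> bool" where
  "riesz_Q_unit smul u \<longleftrightarrow>
     (\<forall>r s a. smul (r + s) a = smul r a + smul s a) \<and>
     (\<forall>r a b. smul r (a + b) = smul r a + smul r b) \<and>
     (\<forall>r s a. smul (r * s) a = smul r (smul s a)) \<and>
     (\<forall>a. smul 1 a = a) \<and>
     (\<forall>r a. 0 \<le> r \<longrightarrow> 0 \<le> a \<longrightarrow> 0 \<le> smul r a) \<and>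
     0 \<le> u \<and>
     (\<forall>a. \<exists>n::nat. a \<le> smul (of_nat n) u \<and> - a \<le> smul (of_nat n) u)"

datatype 'a bexp = BAtom 'a | BTop | BBot | BNot "'a bexp"
  | BAnd "'a bexp" "'a bexp" | BOr "'a bexp" "'a bexp"

text \<open>Equality in B: the congruence generated by the Boolean algebra axioms
  and the defining relations of Spec(R), where BAtom a stands for D(a).\<close>

inductive beq :: "'a::lattice_ab_group_add \<Rightarrow> 'a bexp \<Rightarrow> 'a bexp \<Rightarrow> bool" for u where
  refl: "beq u x x"
| sym: "beq u x y \<Longrightarrow> beq u y x"
| trans: "beq u x y \<Longrightarrow> beq u y z \<Longrightarrow> beq u x z"
| cong_not: "beq u x y \<Longrightarrow> beq u (BNot x) (BNot y)"
| cong_and: "beq u x x' \<Longrightarrow> beq u y y' \<Longrightarrow> beq u (BAnd x y) (BAnd x' y')"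
| cong_or: "beq u x x' \<Longrightarrow> beq u y y' \<Longrightarrow> beq u (BOr x y) (BOr x' y')"
| and_comm: "beq u (BAnd x y) (BAnd y x)"
| or_comm: "beq u (BOr x y) (BOr y x)"
| and_assoc: "beq u (BAnd (BAnd x y) z) (BAnd x (BAnd y z))"
| or_assoc: "beq u (BOr (BOr x y) z) (BOr x (BOr y z))"
| and_absorb: "beq u (BAnd x (BOr x y)) x"
| or_absorb: "beq u (BOr x (BAnd x y)) x"
| distrib: "beq u (BAnd x (BOr y z)) (BOr (BAnd x y) (BAnd x z))"
| and_top: "beq u (BAnd x BTop) x"
| or_bot: "beq u (BOr x BBot) x"
| and_compl: "beq u (BAnd x (BNot x)) BBot"
| or_compl: "beq u (BOr x (BNot x)) BTop"
| D_unit: "beq u (BAtom u) BTop"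
| D_neg: "beq u (BAnd (BAtom a) (BAtom (- a))) BBot"
| D_add: "beq u (BAnd (BAtom (a + b)) (BOr (BAtom a) (BAtom b))) (BAtom (a + b))"
| D_nonpos: "a \<le> 0 \<Longrightarrow> beq u (BAtom a) BBot"
| D_sup: "beq u (BAtom (sup a b)) (BOr (BAtom a) (BAtom b))"

definition ble :: "'a::lattice_ab_group_add \<Rightarrow> 'a bexp \<Rightarrow> 'a bexp \<Rightarrow> bool" where
  "ble u x y \<longleftrightarrow> beq u (BAnd x y) x"

definition bconj :: "'a bexp list \<Rightarrow> 'a bexp" where
  "bconj xs = foldr BAnd xs BTop"

definition bdisj :: "'a bexp list \<Rightarrow> 'a bexp" where
  "bdisj xs = foldr BOr xs BBot"

definition gtb :: "(rat \<Rightarrow> 'a::lattice_ab_group_add \<Rightarrow> 'a) \<Rightarrow> 'a \<Rightarrow> 'a \<Rightarrow> rat \<Rightarrow> 'a bexp" where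
  "gtb smul u f r = BAtom (f - smul r u)"
definition ltb :: "(rat \<Rightarrow> 'a::lattice_ab_group_add \<Rightarrow> 'a) \<Rightarrow> 'a \<Rightarrow> 'a \<Rightarrow> rat \<Rightarrow> 'a bexp" where
  "ltb smul u f r = BAtom (smul r u - f)"
definition leb :: "(rat \<Rightarrow> 'a::lattice_ab_group_add \<Rightarrow> 'a) \<Rightarrow> 'a \<Rightarrow> 'a \<Rightarrow> rat \<Rightarrow> 'a bexp" where
  "leb smul u f r = BNot (gtb smul u f r)"
definition geb :: "(rat \<Rightarrow> 'a::lattice_ab_group_add \<Rightarrow> 'a) \<Rightarrow> 'a \<Rightarrow> 'a \<Rightarrow> rat \<Rightarrow> 'a bexp" where
  "geb smul u f r = BNot (ltb smul u f r)"

text \<open>A formal sum  sum_i r_i x_i  is a list of pairs (r_i, x_i); finite index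
  sets I are the sublists of [0..<length], i.e. subsets of the index range.\<close>

definition pos_simple :: "(rat \<times> 'a bexp) list \<Rightarrow> bool" where
  "pos_simple sf \<longleftrightarrow> (\<forall>p \<in> set sf. 0 \<le> fst p)"

definition idx_sets :: "(rat \<times> 'a bexp) list \<Rightarrow> nat list list" where
  "idx_sets sf = subseqs [0..<length sf]"

definition xI :: "(rat \<times> 'a bexp) list \<Rightarrow> nat list \<Rightarrow> 'a bexp" where
  "xI sf is = bconj (map (\<lambda>i. snd (sf ! i)) is)"

definition rI :: "(rat \<times> 'a bexp) list \<Rightarrow> nat list \<Rightarrow> rat" where
  "rI sf is = sum_list (map (\<lambda>i. fst (sf ! i)) is)"

definition sf_le :: "'a::lattice_ab_group_add \<Rightarrow> (rat \<times> 'a bexp) list \<Rightarrow> (rat \<times> 'a bexp) list \<Rightarrow> bool" where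
  "sf_le u sf tf \<longleftrightarrow>
     (\<forall>is \<in> set (idx_sets sf).
        ble u (xI sf is) (bdisj [xI tf js. js \<leftarrow> idx_sets tf, rI sf is \<le> rI tf js]))"

definition sf_le_elem :: "(rat \<Rightarrow> 'a::lattice_ab_group_add \<Rightarrow> 'a) \<Rightarrow> 'a \<Rightarrow> (rat \<times> 'a bexp) list \<Rightarrow> 'a \<Rightarrow> bool" where
  "sf_le_elem smul u sf f \<longleftrightarrow>
     (\<forall>is \<in> set (idx_sets sf). ble u (xI sf is) (geb smul u f (rI sf is)))"

definition elem_le_sf :: "(rat \<Rightarrow> 'a::lattice_ab_group_add \<Rightarrow> 'a) \<Rightarrow> 'a \<Rightarrow> 'a \<Rightarrow> (rat \<times> 'a bexp) list \<Rightarrow> bool" where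
  "elem_le_sf smul u f tf \<longleftrightarrow>
     beq u BTop (bdisj [BAnd (leb smul u f (rI tf js)) (xI tf js). js \<leftarrow> idx_sets tf])"

end

theory Submission
  imports Defs
begin

(* Fix an index set I. The cover 1 = OR_J ((f <= s_J) AND y_J) splits x_I <= (f >= r_I)
   into the pieces x_I AND (f <= s_J) AND y_J. A piece with r_I <= s_J lies below y_J, one
   of the allowed terms. A piece with s_J < r_I vanishes: D(r_I - f) OR D(f - s_J) is above
   D(r_I - s_J) = 1, because some integer multiple of the positive rational r_I - s_J is at
   least 1; so (f >= r_I) and (f <= s_J) are disjoint. Positivity of the coefficients plays
   no role. *)

declare beq.trans [trans]

lemma beq_imp_ble: "beq u x y \<Longrightarrow> ble u x y"
proof -
  assume xy: "beq u x y"
  have "beq u (BAnd x y) (BAnd x x)" by (rule beq.cong_and[OF beq.refl beq.sym[OF xy]])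
  also have "beq u (BAnd x x) (BAnd x (BOr x (BAnd x x)))"
    by (rule beq.cong_and[OF beq.refl beq.sym[OF beq.or_absorb]])
  also have "beq u \<dots> x" by (rule beq.and_absorb)
  finally show ?thesis unfolding ble_def .
qed

lemma ble_refl: "ble u x x"
  by (rule beq_imp_ble[OF beq.refl])

lemma ble_trans [trans]: "ble u x y \<Longrightarrow> ble u y z \<Longrightarrow> ble u x z"
  unfolding ble_def
proof -
  assume xy: "beq u (BAnd x y) x" and yz: "beq u (BAnd y z) y"
  have "beq u (BAnd x z) (BAnd (BAnd x y) z)" by (rule beq.cong_and[OF beq.sym[OF xy] beq.refl])
  also have "beq u \<dots> (BAnd x (BAnd y z))" by (rule beq.and_assoc)
  also have "beq u \<dots> (BAnd x y)" by (rule beq.cong_and[OF beq.refl yz])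
  also note xy
  finally show "beq u (BAnd x z) x" .
qed

lemma ble_BAnd1: "ble u (BAnd x y) x"
proof -
  have "beq u (BAnd (BAnd x y) x) (BAnd x (BAnd x y))" by (rule beq.and_comm)
  also have "beq u \<dots> (BAnd (BAnd x x) y)" by (rule beq.sym[OF beq.and_assoc])
  also have "beq u \<dots> (BAnd x y)"
    using ble_refl[of u x] unfolding ble_def by (rule beq.cong_and[OF _ beq.refl])
  finally show ?thesis unfolding ble_def .
qed

lemma ble_BAnd2: "ble u (BAnd x y) y"
  using beq_imp_ble[OF beq.and_comm] ble_BAnd1 by (rule ble_trans)

lemma ble_BAndI: "ble u z x \<Longrightarrow> ble u z y \<Longrightarrow> ble u z (BAnd x y)"
  unfolding ble_def
proof -
  assume zx: "beq u (BAnd z x) z" and zy: "beq u (BAnd z y) z"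
  have "beq u (BAnd z (BAnd x y)) (BAnd (BAnd z x) y)" by (rule beq.sym[OF beq.and_assoc])
  also have "beq u \<dots> (BAnd z y)" by (rule beq.cong_and[OF zx beq.refl])
  also note zy
  finally show "beq u (BAnd z (BAnd x y)) z" .
qed

lemma ble_BAnd_mono: "ble u a c \<Longrightarrow> ble u b d \<Longrightarrow> ble u (BAnd a b) (BAnd c d)"
  by (rule ble_BAndI; erule ble_trans[rotated], rule ble_BAnd1 ble_BAnd2)

lemma ble_BOr1: "ble u x (BOr x y)"
  unfolding ble_def by (rule beq.and_absorb)

lemma ble_BOr2: "ble u y (BOr x y)"
  using ble_BOr1 beq_imp_ble[OF beq.or_comm] by (rule ble_trans)

lemma ble_BOrI: "ble u x z \<Longrightarrow> ble u y z \<Longrightarrow> ble u (BOr x y) z"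
  unfolding ble_def
proof -
  assume xz: "beq u (BAnd x z) x" and yz: "beq u (BAnd y z) y"
  have "beq u (BAnd (BOr x y) z) (BAnd z (BOr x y))" by (rule beq.and_comm)
  also have "beq u \<dots> (BOr (BAnd z x) (BAnd z y))" by (rule beq.distrib)
  also have "beq u \<dots> (BOr x y)"
    by (rule beq.cong_or[OF beq.trans[OF beq.and_comm xz] beq.trans[OF beq.and_comm yz]])
  finally show "beq u (BAnd (BOr x y) z) (BOr x y)" .
qed

lemma ble_BTop: "ble u x BTop"
  unfolding ble_def by (rule beq.and_top)

lemma ble_BBot: "ble u BBot x"
proof -
  have "beq u (BAnd BBot x) (BAnd BBot (BOr BBot x))"
    by (rule beq.cong_and[OF beq.refl beq.sym[OF beq.trans[OF beq.or_comm beq.or_bot]]])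
  also have "beq u \<dots> BBot" by (rule beq.and_absorb)
  finally show ?thesis unfolding ble_def .
qed

lemma ble_by_cases:
  assumes "ble u a (BOr b c)" and "ble u (BAnd a b) z" and "ble u (BAnd a c) z"
  shows "ble u a z"
proof -
  have "ble u a (BAnd a (BOr b c))" by (rule ble_BAndI[OF ble_refl assms(1)])
  also have "ble u \<dots> (BOr (BAnd a b) (BAnd a c))" by (rule beq_imp_ble[OF beq.distrib])
  also have "ble u \<dots> z" by (rule ble_BOrI[OF assms(2,3)])
  finally show ?thesis .
qed

lemma ble_by_cases_bdisj:
  "ble u a (bdisj xs) \<Longrightarrow> (\<And>x. x \<in> set xs \<Longrightarrow> ble u (BAnd a x) z) \<Longrightarrow> ble u a z"
proof (induction xs arbitrary: a)
  case Nil
  then show ?case using ble_trans[OF _ ble_BBot] by (simp add: bdisj_def)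
next
  case (Cons x xs)
  have cover: "ble u a (BOr x (bdisj xs))" using Cons.prems(1) by (simp add: bdisj_def)
  have head: "ble u (BAnd a x) z" using Cons.prems(2) by simp
  have tail: "ble u (BAnd a (bdisj xs)) z"
  proof (rule Cons.IH[OF ble_BAnd2])
    fix y assume "y \<in> set xs"
    have "ble u (BAnd (BAnd a (bdisj xs)) y) (BAnd a y)" by (rule ble_BAnd_mono[OF ble_BAnd1 ble_refl])
    also have "ble u \<dots> z" using Cons.prems(2) \<open>y \<in> set xs\<close> by simp
    finally show "ble u (BAnd (BAnd a (bdisj xs)) y) z" .
  qed
  from cover head tail show ?case by (rule ble_by_cases)
qed

lemma ble_bdisj: "x \<in> set xs \<Longrightarrow> ble u x (bdisj xs)"
  by (induction xs) (use ble_BOr1 ble_trans[OF _ ble_BOr2] in \<open>auto simp: bdisj_def\<close>)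

lemma ble_BNot_disjoint_if_cover:
  assumes "ble u BTop (BOr A B)"
  shows "ble u (BAnd (BNot A) (BNot B)) BBot"
proof (rule ble_by_cases)
  show "ble u (BAnd (BNot A) (BNot B)) (BOr A B)" using ble_BTop assms by (rule ble_trans)
  have "ble u (BAnd (BAnd (BNot A) (BNot B)) A) (BAnd A (BNot A))"
    by (rule ble_BAndI[OF ble_BAnd2 ble_trans[OF ble_BAnd1 ble_BAnd1]])
  then show "ble u (BAnd (BAnd (BNot A) (BNot B)) A) BBot"
    using beq_imp_ble[OF beq.and_compl] by (rule ble_trans)
  have "ble u (BAnd (BAnd (BNot A) (BNot B)) B) (BAnd B (BNot B))"
    by (rule ble_BAndI[OF ble_BAnd2 ble_trans[OF ble_BAnd1 ble_BAnd2]])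
  then show "ble u (BAnd (BAnd (BNot A) (BNot B)) B) BBot"
    using beq_imp_ble[OF beq.and_compl] by (rule ble_trans)
qed

lemma ble_BAtom_mono: "a \<le> b \<Longrightarrow> ble u (BAtom a) (BAtom b)"
proof -
  assume "a \<le> b"
  then have "beq u (BOr (BAtom a) (BAtom b)) (BAtom b)"
    using beq.sym[OF beq.D_sup[of u a b]] by (simp add: sup_absorb2)
  with ble_BOr1 show ?thesis by (rule ble_trans[OF _ beq_imp_ble])
qed

lemma ble_BAtom_add: "ble u (BAtom (a + b)) (BOr (BAtom a) (BAtom b))"
  unfolding ble_def by (rule beq.D_add)

context
  fixes smul :: "rat \<Rightarrow> 'a::lattice_ab_group_add \<Rightarrow> 'a" and u :: 'a
  assumes riesz: "riesz_Q_unit smul u"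
begin

lemma smul_add_left: "smul (r + s) a = smul r a + smul s a"
  using riesz unfolding riesz_Q_unit_def by blast

lemma smul_mult: "smul (r * s) a = smul r (smul s a)"
  using riesz unfolding riesz_Q_unit_def by blast

lemma smul_one: "smul 1 a = a"
  using riesz unfolding riesz_Q_unit_def by blast

lemma smul_nonneg: "0 \<le> r \<Longrightarrow> 0 \<le> a \<Longrightarrow> 0 \<le> smul r a"
  using riesz unfolding riesz_Q_unit_def by blast

lemma unit_nonneg: "0 \<le> u"
  using riesz unfolding riesz_Q_unit_def by blast

lemma smul_diff_left: "smul r a - smul s a = smul (r - s) a"
  using smul_add_left[of "r - s" s a] by (simp add: algebra_simps)

lemma smul_zero_left: "smul 0 a = 0"
  using smul_add_left[of 0 0 a] by simp

lemma ble_BAtom_smul_of_nat: "ble u (BAtom (smul (of_nat n) a)) (BAtom a)"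
proof (induction n)
  case 0
  have "beq u (BAtom (smul 0 a)) BBot" by (rule beq.D_nonpos) (simp add: smul_zero_left)
  then show ?case using ble_trans[OF beq_imp_ble ble_BBot] by simp
next
  case (Suc n)
  have "smul (of_nat (Suc n)) a = smul (of_nat n) a + a"
    using smul_add_left[of "of_nat n" 1 a] by (simp add: smul_one add.commute)
  then have "ble u (BAtom (smul (of_nat (Suc n)) a)) (BOr (BAtom (smul (of_nat n) a)) (BAtom a))"
    using ble_BAtom_add by metis
  also have "ble u \<dots> (BAtom a)" by (rule ble_BOrI[OF Suc ble_refl])
  finally show ?case .
qed

lemma BTop_ble_BAtom_smul_unit: "0 < c \<Longrightarrow> ble u BTop (BAtom (smul c u))"
proof -
  assume "0 < c"
  obtain n :: nat where "1 / c \<le> of_nat n" using reals_Archimedean2[of "1 / c"] by (meson less_imp_le)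
  with \<open>0 < c\<close> have "0 \<le> of_nat n * c - 1" by (simp add: field_simps)
  then have "0 \<le> smul (of_nat n * c) u - smul 1 u"
    unfolding smul_diff_left by (rule smul_nonneg[OF _ unit_nonneg])
  then have unit_le: "u \<le> smul (of_nat n) (smul c u)" by (simp add: smul_one smul_mult)
  have "ble u BTop (BAtom u)" by (rule beq_imp_ble[OF beq.sym[OF beq.D_unit]])
  also have "ble u \<dots> (BAtom (smul (of_nat n) (smul c u)))" by (rule ble_BAtom_mono[OF unit_le])
  also have "ble u \<dots> (BAtom (smul c u))" by (rule ble_BAtom_smul_of_nat)
  finally show ?thesis .
qed

lemma geb_leb_disjoint:
  assumes "s < r"
  shows "ble u (BAnd (geb smul u f r) (leb smul u f s)) BBot"
  unfolding geb_def leb_def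
proof (rule ble_BNot_disjoint_if_cover)
  have "(smul r u - f) + (f - smul s u) = smul (r - s) u"
    using smul_diff_left[of r u s] by (simp add: algebra_simps)
  then have "ble u (BAtom (smul (r - s) u)) (BOr (ltb smul u f r) (gtb smul u f s))"
    unfolding ltb_def gtb_def using ble_BAtom_add by metis
  with ble_trans[OF BTop_ble_BAtom_smul_unit[of "r - s"]] assms
  show "ble u BTop (BOr (ltb smul u f r) (gtb smul u f s))" by simp
qed

lemma ble_bdisj_if_ble_geb:
  assumes a_ge: "ble u a (geb smul u f r)" and f_le: "elem_le_sf smul u f tf"
  shows "ble u a (bdisj [xI tf js. js \<leftarrow> idx_sets tf, r \<le> rI tf js])" (is "ble u a (bdisj ?G)")
proof (rule ble_by_cases_bdisj)
  show "ble u a (bdisj [BAnd (leb smul u f (rI tf js)) (xI tf js). js \<leftarrow> idx_sets tf])"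
    using ble_BTop beq_imp_ble[OF f_le[unfolded elem_le_sf_def]] by (rule ble_trans)
next
  fix t assume "t \<in> set [BAnd (leb smul u f (rI tf js)) (xI tf js). js \<leftarrow> idx_sets tf]"
  then obtain js where js: "js \<in> set (idx_sets tf)"
    and t: "t = BAnd (leb smul u f (rI tf js)) (xI tf js)" by auto
  show "ble u (BAnd a t) (bdisj ?G)"
  proof (cases "r \<le> rI tf js")
    case True
    with js have "ble u (xI tf js) (bdisj ?G)" by (intro ble_bdisj) auto
    then show ?thesis unfolding t by (rule ble_trans[OF ble_BAnd2 ble_trans[OF ble_BAnd2]])
  next
    case False
    have "ble u (BAnd a t) (BAnd (geb smul u f r) (leb smul u f (rI tf js)))"
      unfolding t by (rule ble_BAnd_mono[OF a_ge ble_BAnd1])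
    also have "ble u \<dots> BBot" using False by (intro geb_leb_disjoint) simp
    also have "ble u \<dots> (bdisj ?G)" by (rule ble_BBot)
    finally show ?thesis .
  qed
qed

end

theorem lemma4p7:
  fixes smul :: "rat \<Rightarrow> 'a::lattice_ab_group_add \<Rightarrow> 'a"
    and u :: 'a and f :: 'a
    and sf tf :: "(rat \<times> 'a bexp) list"
  assumes "riesz_Q_unit smul u"
    and "pos_simple sf" and "pos_simple tf"
    and "sf_le_elem smul u sf f"
    and "elem_le_sf smul u f tf"
  shows "sf_le u sf tf"
  unfolding sf_le_def
proof
  fix "is" assume "is \<in> set (idx_sets sf)"
  with assms(4) have "ble u (xI sf is) (geb smul u f (rI sf is))"
    unfolding sf_le_elem_def by blast
  with assms(1) show "ble u (xI sf is) (bdisj [xI tf js. js \<leftarrow> idx_sets tf, rI sf is \<le> rI tf js])"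
    by (rule ble_bdisj_if_ble_geb) (rule assms(5))
qed

end
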